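(* Let $n\ge1$, $\preceq$ an admissible order on $L([0,1])$, $F\colon L([0,1])^2\to L([0,1])$, $G\colon L([0,1])^n\to L([0,1])$. The IV Sugeno-like $FG$-functional $\mathbf S_m^{F,G}$ is non-decreasing (in each argument, w.r.t. $\preceq$) for every IV fuzzy measure $m$ whenever: (i) $F(\cdot,\mathbf1)$ is non-decreasing, $G=f\circ\mathrm{Proj}_1$ for some non-decreasing $f\colon L([0,1])\to L([0,1])$; or (ii) $F$ is non-decreasing (in each variable), $G=f\circ\vee$ for some non-decreasing $f\colon L([0,1])\to L([0,1])$.
   Context: $N=\{1,\dots,n\}$. $L([0,1])=\{[a,b]:0\le a\le b\le1\}$, $\mathbf0=[0,0]$, $\mathbf1=[1,1]$. An admissible order $\preceq$ is a total order on $L([0,1])$ with $[a,b]\preceq[c,d]$ whenever $a\le c$, $b\le d$. $\vee$ denotes maximum w.r.t. $\preceq$; all monotonicity is w.r.t. $\preceq$; $\mathrm{Proj}_1(X_1,\dots,X_n)=X_1$. An IV fuzzy measure w.r.t. $\preceq$ is $m\colon2^N\to L([0,1])$, $m(\emptyset)=\mathbf0$, $m(N)=\mathbf1$, $m(A)\preceq m(B)$ for $A\subseteq B$. For a permutation $\sigma$, $E_{\sigma(i)}=\{\sigma(i),\dots,\sigma(n)\}$. $\mathbf S_m^{F,G}(X_1,\dots,X_n)=G\big(F(X_{\sigma(1)},m(E_{\sigma(1)})),\dots,F(X_{\sigma(n)},m(E_{\sigma(n)}))\big)$ with $\sigma$ any permutation such that $X_{\sigma(1)}\preceq\dots\preceq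 X_{\sigma(n)}$; it is defined when this value does not depend on the choice of $\sigma$ for all inputs. *)

theory Defs
  imports Complex_Main "HOL-Combinatorics.Permutations"
begin

text \<open>Closed subintervals [a,b] of [0,1], represented as pairs (a,b).\<close>
definition Lint :: "(real \<times> real) set" where
  "Lint = {(a, b). 0 \<le> a \<and> a \<le> b \<and> b \<le> 1}"

definition zeroI :: "real \<times> real" where "zeroI = (0, 0)"
definition oneI :: "real \<times> real" where "oneI = (1, 1)"

definition admissible :: "(real \<times> real \<Rightarrow> real \<times> real \<Rightarrow> bool) \<Rightarrow> bool" where
  "admissible le \<longleftrightarrow>
     (\<forall>x\<in>Lint. le x x) \<and>
     (\<forall>x\<in>Lint. \<forall>y\<in>Lint. le x y \<and> le y x \<longrightarrow> x = y) \<and>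
     (\<forall>x\<in>Lint. \<forall>y\<in>Lint. \<forall>z\<in>Lint. le x y \<and> le y z \<longrightarrow> le x z) \<and>
     (\<forall>x\<in>Lint. \<forall>y\<in>Lint. le x y \<or> le y x) \<and>
     (\<forall>a b c d. (a, b) \<in> Lint \<and> (c, d) \<in> Lint \<and> a \<le> c \<and> b \<le> d \<longrightarrow> le (a, b) (c, d))"

definition lmax :: "(real \<times> real \<Rightarrow> real \<times> real \<Rightarrow> bool) \<Rightarrow> nat \<Rightarrow> (nat \<Rightarrow> real \<times> real) \<Rightarrow> real \<times> real" where
  "lmax le n X = (THE y. y \<in> X ` {1..n} \<and> (\<forall>z\<in>X ` {1..n}. le z y))"

definition mono_le :: "(real \<times> real \<Rightarrow> real \<times> real \<Rightarrow> bool) \<Rightarrow> (real \<times> real \<Rightarrow> real \<times> real) \<Rightarrow> bool" where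
  "mono_le le f \<longleftrightarrow> (\<forall>x\<in>Lint. \<forall>y\<in>Lint. le x y \<longrightarrow> le (f x) (f y))"

definition iv_fuzzy_measure :: "(real \<times> real \<Rightarrow> real \<times> real \<Rightarrow> bool) \<Rightarrow> nat \<Rightarrow> (nat set \<Rightarrow> real \<times> real) \<Rightarrow> bool" where
  "iv_fuzzy_measure le n m \<longleftrightarrow>
     (\<forall>A. A \<subseteq> {1..n} \<longrightarrow> m A \<in> Lint) \<and>
     m {} = zeroI \<and> m {1..n} = oneI \<and>
     (\<forall>A B. A \<subseteq> B \<and> B \<subseteq> {1..n} \<longrightarrow> le (m A) (m B))"

definition sorting_perm :: "(real \<times> real \<Rightarrow> real \<times> real \<Rightarrow> bool) \<Rightarrow> nat \<Rightarrow> (nat \<Rightarrow> real \<times> real) \<Rightarrow> (nat \<Rightarrow> nat) \<Rightarrow> bool" where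
  "sorting_perm le n X \<sigma> \<longleftrightarrow> \<sigma> permutes {1..n} \<and>
     (\<forall>i j. 1 \<le> i \<and> i \<le> j \<and> j \<le> n \<longrightarrow> le (X (\<sigma> i)) (X (\<sigma> j)))"

definition sugeno_val ::
  "(real \<times> real \<Rightarrow> real \<times> real \<Rightarrow> real \<times> real) \<Rightarrow> ((nat \<Rightarrow> real \<times> real) \<Rightarrow> real \<times> real)
   \<Rightarrow> nat \<Rightarrow> (nat set \<Rightarrow> real \<times> real) \<Rightarrow> (nat \<Rightarrow> real \<times> real) \<Rightarrow> (nat \<Rightarrow> nat) \<Rightarrow> real \<times> real" where
  "sugeno_val F G n m X \<sigma> = G (\<lambda>i. F (X (\<sigma> i)) (m (\<sigma> ` {i..n})))"

text \<open>S_m^{F,G} is (well defined and) non-decreasing in each argument: raising one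
  argument never decreases the value, whatever sorting permutations are used
  (taking y = X i this also yields independence of the choice of sigma).\<close>
definition sugeno_FG_nondecreasing ::
  "(real \<times> real \<Rightarrow> real \<times> real \<Rightarrow> bool) \<Rightarrow> (real \<times> real \<Rightarrow> real \<times> real \<Rightarrow> real \<times> real)
   \<Rightarrow> ((nat \<Rightarrow> real \<times> real) \<Rightarrow> real \<times> real) \<Rightarrow> nat \<Rightarrow> (nat set \<Rightarrow> real \<times> real) \<Rightarrow> bool" where
  "sugeno_FG_nondecreasing le F G n m \<longleftrightarrow>
     (\<forall>X i y \<sigma> \<sigma>'. (\<forall>j\<in>{1..n}. X j \<in> Lint) \<longrightarrow> i \<in> {1..n} \<longrightarrow> y \<in> Lint \<longrightarrow>
        le (X i) y \<longrightarrow> sorting_perm le n X \<sigma> \<longrightarrow> sorting_perm le n (X(i := y)) \<sigma>' \<longrightarrow>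
        le (sugeno_val F G n m X \<sigma>) (sugeno_val F G n m (X(i := y)) \<sigma>'))"

end

theory Submission
  imports Defs
begin

text \<open>Raising an argument of the functional, from X to a pointwise larger Y, can only raise the
  aggregated terms F (X (\<sigma> k)) (m (E k)), where E k = {\<sigma> k, ..., \<sigma> n}. In case (i) only the
  first term F (min X) \<one> matters, and min X \<preceq> min Y. In case (ii) every term for X is
  dominated by some term for Y: pick k' least with \<sigma>' k' \<in> E k; then E k \<subseteq> E' k' and
  X (\<sigma> k) \<preceq> X (\<sigma>' k') \<preceq> Y (\<sigma>' k'), so monotonicity of F and m applies, and the maximal
  term for X is below the maximal term for Y. Neither argument needs \<sigma>' to sort Y.\<close>

lemma admissible_refl: "admissible le \<Longrightarrow> x \<in> Lint \<Longrightarrow> le x x"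
  unfolding admissible_def by blast

lemma admissible_antisym:
  "admissible le \<Longrightarrow> x \<in> Lint \<Longrightarrow> y \<in> Lint \<Longrightarrow> le x y \<Longrightarrow> le y x \<Longrightarrow> x = y"
  unfolding admissible_def by blast

lemma admissible_trans:
  "admissible le \<Longrightarrow> x \<in> Lint \<Longrightarrow> y \<in> Lint \<Longrightarrow> z \<in> Lint \<Longrightarrow> le x y \<Longrightarrow> le y z \<Longrightarrow> le x z"
  unfolding admissible_def by blast

lemma admissible_total: "admissible le \<Longrightarrow> x \<in> Lint \<Longrightarrow> y \<in> Lint \<Longrightarrow> le x y \<or> le y x"
  unfolding admissible_def by blast

lemma mono_leD: "mono_le le f \<Longrightarrow> x \<in> Lint \<Longrightarrow> y \<in> Lint \<Longrightarrow> le x y \<Longrightarrow> le (f x) (f y)"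
  unfolding mono_le_def by blast

lemma admissible_greatest_exists:
  assumes "admissible le" "finite S" "S \<noteq> {}" "S \<subseteq> Lint"
  shows "\<exists>y\<in>S. \<forall>z\<in>S. le z y"
  using assms(2-4)
proof (induction S rule: finite_ne_induct)
  case (singleton x)
  then show ?case using admissible_refl[OF assms(1)] by auto
next
  case (insert x S)
  then obtain y where y: "y \<in> S" "\<forall>z\<in>S. le z y" by auto
  show ?case
  proof (cases "le y x")
    case True
    then show ?thesis using y insert.prems admissible_refl[OF assms(1)] admissible_trans[OF assms(1)]
      by (metis insert_iff subsetD)
  next
    case False
    then show ?thesis using y insert.prems admissible_total[OF assms(1)]
      by (metis insert_iff subsetD)
  qed
qed

lemma lmax_greatest:
  assumes "admissible le" "n \<ge> 1" "\<forall>j\<in>{1..n}. X j \<in> Lint"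
  shows "lmax le n X \<in> X ` {1..n}" and "\<forall>z\<in>X ` {1..n}. le z (lmax le n X)"
proof -
  have S: "finite (X ` {1..n})" "X ` {1..n} \<noteq> {}" "X ` {1..n} \<subseteq> Lint"
    using assms by auto
  then obtain y where y: "y \<in> X ` {1..n}" "\<forall>z\<in>X ` {1..n}. le z y"
    using admissible_greatest_exists[OF assms(1)] by blast
  have "\<exists>!y. y \<in> X ` {1..n} \<and> (\<forall>z\<in>X ` {1..n}. le z y)"
  proof (rule ex1I[of _ y])
    fix w assume w: "w \<in> X ` {1..n} \<and> (\<forall>z\<in>X ` {1..n}. le z w)"
    show "w = y"
      using admissible_antisym[OF assms(1)] w y S(3) by (meson subsetD)
  qed (use y in blast)
  then have "lmax le n X \<in> X ` {1..n} \<and> (\<forall>z\<in>X ` {1..n}. le z (lmax le n X))"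
    unfolding lmax_def by (rule theI')
  then show "lmax le n X \<in> X ` {1..n}" and "\<forall>z\<in>X ` {1..n}. le z (lmax le n X)"
    by blast+
qed

lemma lmax_in_Lint:
  assumes "admissible le" "n \<ge> 1" "\<forall>j\<in>{1..n}. X j \<in> Lint"
  shows "lmax le n X \<in> Lint"
  using lmax_greatest(1)[OF assms] assms(3) by auto

lemma lmax_le_lmax_if_dominated:
  assumes "admissible le" "n \<ge> 1"
    and X: "\<forall>j\<in>{1..n}. X j \<in> Lint" and Y: "\<forall>j\<in>{1..n}. Y j \<in> Lint"
    and dom: "\<forall>k\<in>{1..n}. \<exists>k'\<in>{1..n}. le (X k) (Y k')"
  shows "le (lmax le n X) (lmax le n Y)"
proof -
  obtain k where k: "k \<in> {1..n}" "lmax le n X = X k"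
    using lmax_greatest(1)[OF assms(1,2) X] by blast
  obtain k' where k': "k' \<in> {1..n}" "le (X k) (Y k')"
    using dom k(1) by blast
  have "le (Y k') (lmax le n Y)"
    using lmax_greatest(2)[OF assms(1,2) Y] k'(1) by blast
  then show ?thesis
    unfolding k(2)
    using admissible_trans[OF assms(1) _ _ lmax_in_Lint[OF assms(1,2) Y] k'(2)] k(1) k'(1) X Y
    by blast
qed

lemma iv_fuzzy_measure_in_Lint: "iv_fuzzy_measure le n m \<Longrightarrow> A \<subseteq> {1..n} \<Longrightarrow> m A \<in> Lint"
  unfolding iv_fuzzy_measure_def by blast

lemma iv_fuzzy_measure_mono:
  "iv_fuzzy_measure le n m \<Longrightarrow> A \<subseteq> B \<Longrightarrow> B \<subseteq> {1..n} \<Longrightarrow> le (m A) (m B)"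
  unfolding iv_fuzzy_measure_def by blast

lemma iv_fuzzy_measure_top: "iv_fuzzy_measure le n m \<Longrightarrow> m {1..n} = oneI"
  unfolding iv_fuzzy_measure_def by blast

lemma permutes_tail_subset:
  fixes n :: nat
  assumes "\<sigma> permutes {1..n}" "1 \<le> k"
  shows "\<sigma> ` {k..n} \<subseteq> {1..n}"
proof -
  have "\<sigma> ` {k..n} \<subseteq> \<sigma> ` {1..n}"
    using assms(2) by (intro image_mono) auto
  then show ?thesis
    by (simp only: permutes_image[OF assms(1)])
qed

lemma permutes_least_tail_superset:
  fixes \<sigma> :: "nat \<Rightarrow> nat"
  assumes \<sigma>: "\<sigma> permutes {1..n}" and A: "A \<subseteq> {1..n}" "A \<noteq> {}"
  obtains k where "k \<in> {1..n}" "\<sigma> k \<in> A" "A \<subseteq> \<sigma> ` {k..n}"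
proof -
  define K where "K = {k\<in>{1..n}. \<sigma> k \<in> A}"
  have K: "k \<in> K \<longleftrightarrow> k \<in> {1..n} \<and> \<sigma> k \<in> A" for k
    unfolding K_def by simp
  have "A \<subseteq> \<sigma> ` K"
  proof
    fix a assume "a \<in> A"
    then have "a \<in> \<sigma> ` {1..n}"
      using A(1) permutes_image[OF \<sigma>] by blast
    then show "a \<in> \<sigma> ` K"
      using \<open>a \<in> A\<close> K by auto
  qed
  have "finite K"
    unfolding K_def by simp
  moreover have "K \<noteq> {}"
    using A(2) \<open>A \<subseteq> \<sigma> ` K\<close> by auto
  ultimately have "Min K \<in> K"
    by (rule Min_in)
  have "K \<subseteq> {Min K..n}"
    using \<open>finite K\<close> K by auto
  then have "A \<subseteq> \<sigma> ` {Min K..n}"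
    using \<open>A \<subseteq> \<sigma> ` K\<close> by blast
  then show thesis
    using that \<open>Min K \<in> K\<close> K by blast
qed

lemma sorting_perm_least_on_tail:
  assumes "sorting_perm le n X \<sigma>" "1 \<le> k" "j \<in> \<sigma> ` {k..n}"
  shows "le (X (\<sigma> k)) (X j)"
  using assms unfolding sorting_perm_def by auto

lemma sorting_perm_first_least:
  assumes "sorting_perm le n X \<sigma>" "j \<in> {1..n}"
  shows "le (X (\<sigma> 1)) (X j)"
proof -
  have "\<sigma> ` {1..n} = {1..n}"
    using assms(1) permutes_image unfolding sorting_perm_def by blast
  then show ?thesis
    using sorting_perm_least_on_tail[OF assms(1)] assms(2) by simp
qed

definition sugeno_terms ::
  "(real \<times> real \<Rightarrow> real \<times> real \<Rightarrow> real \<times> real) \<Rightarrow> nat \<Rightarrow> (nat set \<Rightarrow> real \<times> real)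
   \<Rightarrow> (nat \<Rightarrow> real \<times> real) \<Rightarrow> (nat \<Rightarrow> nat) \<Rightarrow> nat \<Rightarrow> real \<times> real" where
  "sugeno_terms F n m X \<sigma> = (\<lambda>i. F (X (\<sigma> i)) (m (\<sigma> ` {i..n})))"

lemma sugeno_val_eq: "sugeno_val F G n m X \<sigma> = G (sugeno_terms F n m X \<sigma>)"
  unfolding sugeno_val_def sugeno_terms_def ..

lemma sugeno_terms_in_Lint:
  assumes F: "\<forall>x\<in>Lint. \<forall>y\<in>Lint. F x y \<in> Lint" and m: "iv_fuzzy_measure le n m"
    and X: "\<forall>j\<in>{1..n}. X j \<in> Lint" and \<sigma>: "\<sigma> permutes {1..n}"
  shows "\<forall>k\<in>{1..n}. sugeno_terms F n m X \<sigma> k \<in> Lint"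
proof
  fix k assume k: "k \<in> {1..n}"
  have "X (\<sigma> k) \<in> Lint"
    using X permutes_in_image[OF \<sigma>] k by blast
  moreover have "m (\<sigma> ` {k..n}) \<in> Lint"
    using iv_fuzzy_measure_in_Lint[OF m permutes_tail_subset[OF \<sigma>]] k by simp
  ultimately show "sugeno_terms F n m X \<sigma> k \<in> Lint"
    using F unfolding sugeno_terms_def by blast
qed

lemma sugeno_terms_first:
  assumes "iv_fuzzy_measure le n m" "\<sigma> permutes {1..n}"
  shows "sugeno_terms F n m X \<sigma> 1 = F (X (\<sigma> 1)) oneI"
  using iv_fuzzy_measure_top[OF assms(1)] permutes_image[OF assms(2)]
  unfolding sugeno_terms_def by simp

lemma sugeno_terms_dominated:
  assumes le: "admissible le"
    and F: "\<forall>x\<in>Lint. \<forall>y\<in>Lint. F x y \<in> Lint"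
    and F_mono1: "\<forall>y\<in>Lint. mono_le le (\<lambda>x. F x y)"
    and F_mono2: "\<forall>x\<in>Lint. mono_le le (\<lambda>y. F x y)"
    and m: "iv_fuzzy_measure le n m"
    and X: "\<forall>j\<in>{1..n}. X j \<in> Lint" and Y: "\<forall>j\<in>{1..n}. Y j \<in> Lint"
    and XY: "\<forall>j\<in>{1..n}. le (X j) (Y j)"
    and \<sigma>: "sorting_perm le n X \<sigma>" and \<sigma>': "\<sigma>' permutes {1..n}"
    and k: "k \<in> {1..n}"
  shows "\<exists>k'\<in>{1..n}. le (sugeno_terms F n m X \<sigma> k) (sugeno_terms F n m Y \<sigma>' k')"
proof -
  have \<sigma>_perm: "\<sigma> permutes {1..n}"
    using \<sigma> unfolding sorting_perm_def by blast
  define E where "E = \<sigma> ` {k..n}"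
  have E: "E \<subseteq> {1..n}" "E \<noteq> {}"
    using permutes_tail_subset[OF \<sigma>_perm] k unfolding E_def by auto
  obtain k' where k': "k' \<in> {1..n}" "\<sigma>' k' \<in> E" and E_sub: "E \<subseteq> \<sigma>' ` {k'..n}"
    using permutes_least_tail_superset[OF \<sigma>' E] by blast
  define E' where "E' = \<sigma>' ` {k'..n}"
  have E': "E' \<subseteq> {1..n}"
    using permutes_tail_subset[OF \<sigma>'] k' unfolding E'_def by simp
  have x: "X (\<sigma> k) \<in> Lint" and x': "X (\<sigma>' k') \<in> Lint" and y': "Y (\<sigma>' k') \<in> Lint"
    using X Y k k' permutes_in_image[OF \<sigma>_perm] permutes_in_image[OF \<sigma>'] by blast+
  have mE: "m E \<in> Lint" and mE': "m E' \<in> Lint"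
    using iv_fuzzy_measure_in_Lint[OF m] E E' by blast+
  have "le (X (\<sigma> k)) (X (\<sigma>' k'))"
    using sorting_perm_least_on_tail[OF \<sigma>] k k'(2) unfolding E_def by simp
  moreover have "le (X (\<sigma>' k')) (Y (\<sigma>' k'))"
    using XY k'(1) permutes_in_image[OF \<sigma>'] by blast
  ultimately have "le (X (\<sigma> k)) (Y (\<sigma>' k'))"
    using admissible_trans[OF le x x' y'] by blast
  then have "le (F (X (\<sigma> k)) (m E)) (F (Y (\<sigma>' k')) (m E))"
    using mono_leD[OF _ x y'] F_mono1 mE by blast
  moreover have "le (m E) (m E')"
    using iv_fuzzy_measure_mono[OF m E_sub[folded E'_def] E'] .
  then have "le (F (Y (\<sigma>' k')) (m E)) (F (Y (\<sigma>' k')) (m E'))"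
    using mono_leD[OF _ mE mE'] F_mono2 y' by blast
  ultimately have "le (F (X (\<sigma> k)) (m E)) (F (Y (\<sigma>' k')) (m E'))"
    using admissible_trans[OF le] F x y' mE mE' by blast
  then show ?thesis
    using k'(1) unfolding sugeno_terms_def E_def E'_def by blast
qed

lemma sugeno_val_mono_proj:
  assumes le: "admissible le" "n \<ge> 1"
    and F: "\<forall>x\<in>Lint. \<forall>y\<in>Lint. F x y \<in> Lint" and F_mono: "mono_le le (\<lambda>x. F x oneI)"
    and f: "mono_le le f" and G: "\<forall>X. (\<forall>j\<in>{1..n}. X j \<in> Lint) \<longrightarrow> G X = f (X 1)"
    and m: "iv_fuzzy_measure le n m"
    and X: "\<forall>j\<in>{1..n}. X j \<in> Lint" and Y: "\<forall>j\<in>{1..n}. Y j \<in> Lint"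
    and XY: "\<forall>j\<in>{1..n}. le (X j) (Y j)"
    and \<sigma>: "sorting_perm le n X \<sigma>" and \<sigma>': "\<sigma>' permutes {1..n}"
  shows "le (sugeno_val F G n m X \<sigma>) (sugeno_val F G n m Y \<sigma>')"
proof -
  have \<sigma>_perm: "\<sigma> permutes {1..n}"
    using \<sigma> unfolding sorting_perm_def by blast
  have one: "1 \<in> {1..n}" "oneI \<in> Lint"
    using le(2) unfolding oneI_def Lint_def by auto
  have x: "X (\<sigma> 1) \<in> Lint" and x': "X (\<sigma>' 1) \<in> Lint" and y': "Y (\<sigma>' 1) \<in> Lint"
    using X Y one permutes_in_image[OF \<sigma>_perm] permutes_in_image[OF \<sigma>'] by blast+
  have "le (X (\<sigma> 1)) (Y (\<sigma>' 1))"
    using sorting_perm_first_least[OF \<sigma>] XY admissible_trans[OF le(1) x x' y']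
      one permutes_in_image[OF \<sigma>'] by blast
  then have "le (F (X (\<sigma> 1)) oneI) (F (Y (\<sigma>' 1)) oneI)"
    using mono_leD[OF F_mono x y'] by simp
  then have "le (f (F (X (\<sigma> 1)) oneI)) (f (F (Y (\<sigma>' 1)) oneI))"
    using mono_leD[OF f] F x y' one by blast
  then show ?thesis
    unfolding sugeno_val_eq
      G[THEN spec, THEN mp, OF sugeno_terms_in_Lint[OF F m X \<sigma>_perm]]
      G[THEN spec, THEN mp, OF sugeno_terms_in_Lint[OF F m Y \<sigma>']]
      sugeno_terms_first[OF m \<sigma>_perm] sugeno_terms_first[OF m \<sigma>'] .
qed

lemma sugeno_val_mono_max:
  assumes le: "admissible le" "n \<ge> 1"
    and F: "\<forall>x\<in>Lint. \<forall>y\<in>Lint. F x y \<in> Lint"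
    and F_mono1: "\<forall>y\<in>Lint. mono_le le (\<lambda>x. F x y)"
    and F_mono2: "\<forall>x\<in>Lint. mono_le le (\<lambda>y. F x y)"
    and f: "mono_le le f" and G: "\<forall>X. (\<forall>j\<in>{1..n}. X j \<in> Lint) \<longrightarrow> G X = f (lmax le n X)"
    and m: "iv_fuzzy_measure le n m"
    and X: "\<forall>j\<in>{1..n}. X j \<in> Lint" and Y: "\<forall>j\<in>{1..n}. Y j \<in> Lint"
    and XY: "\<forall>j\<in>{1..n}. le (X j) (Y j)"
    and \<sigma>: "sorting_perm le n X \<sigma>" and \<sigma>': "\<sigma>' permutes {1..n}"
  shows "le (sugeno_val F G n m X \<sigma>) (sugeno_val F G n m Y \<sigma>')"
proof -
  define T where "T = sugeno_terms F n m X \<sigma>"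
  define T' where "T' = sugeno_terms F n m Y \<sigma>'"
  have T: "\<forall>k\<in>{1..n}. T k \<in> Lint" and T': "\<forall>k\<in>{1..n}. T' k \<in> Lint"
    using sugeno_terms_in_Lint[OF F m] X Y \<sigma> \<sigma>'
    unfolding T_def T'_def sorting_perm_def by blast+
  have "le (lmax le n T) (lmax le n T')"
    using lmax_le_lmax_if_dominated[OF le T T']
      sugeno_terms_dominated[OF le(1) F F_mono1 F_mono2 m X Y XY \<sigma> \<sigma>']
    unfolding T_def T'_def by blast
  then have "le (f (lmax le n T)) (f (lmax le n T'))"
    by (rule mono_leD[OF f lmax_in_Lint[OF le T] lmax_in_Lint[OF le T']])
  then show ?thesis
    unfolding sugeno_val_eq T_def[symmetric] T'_def[symmetric]
      G[THEN spec, THEN mp, OF T] G[THEN spec, THEN mp, OF T'] .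
qed

lemma sugeno_FG_nondecreasingI:
  assumes "admissible le"
    and mono: "\<And>X Y \<sigma> \<sigma>'. \<forall>j\<in>{1..n}. X j \<in> Lint \<Longrightarrow> \<forall>j\<in>{1..n}. Y j \<in> Lint \<Longrightarrow>
      \<forall>j\<in>{1..n}. le (X j) (Y j) \<Longrightarrow> sorting_perm le n X \<sigma> \<Longrightarrow> \<sigma>' permutes {1..n} \<Longrightarrow>
      le (sugeno_val F G n m X \<sigma>) (sugeno_val F G n m Y \<sigma>')"
  shows "sugeno_FG_nondecreasing le F G n m"
  unfolding sugeno_FG_nondecreasing_def
proof (intro allI impI)
  fix X i y \<sigma> \<sigma>'
  assume X: "\<forall>j\<in>{1..n}. X j \<in> Lint" and "i \<in> {1..n}" and y: "y \<in> Lint" and "le (X i) y"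
    and \<sigma>: "sorting_perm le n X \<sigma>" and \<sigma>': "sorting_perm le n (X(i := y)) \<sigma>'"
  have "\<forall>j\<in>{1..n}. le (X j) ((X(i := y)) j)"
    using \<open>le (X i) y\<close> X admissible_refl[OF assms(1)] by simp
  moreover have "\<forall>j\<in>{1..n}. (X(i := y)) j \<in> Lint"
    using X y by simp
  ultimately show "le (sugeno_val F G n m X \<sigma>) (sugeno_val F G n m (X(i := y)) \<sigma>')"
    using mono[OF X _ _ \<sigma>] \<sigma>' unfolding sorting_perm_def by blast
qed

theorem proposition11:
  fixes le :: "real \<times> real \<Rightarrow> real \<times> real \<Rightarrow> bool"
    and F :: "real \<times> real \<Rightarrow> real \<times> real \<Rightarrow> real \<times> real"
    and G :: "(nat \<Rightarrow> real \<times> real) \<Rightarrow> real \<times> real"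
    and n :: nat
  assumes "n \<ge> 1"
    and "admissible le"
    and F_range: "\<forall>x\<in>Lint. \<forall>y\<in>Lint. F x y \<in> Lint"
    and G_range: "\<forall>X. (\<forall>j\<in>{1..n}. X j \<in> Lint) \<longrightarrow> G X \<in> Lint"
    and "(mono_le le (\<lambda>x. F x oneI) \<and>
           (\<exists>f. (\<forall>x\<in>Lint. f x \<in> Lint) \<and> mono_le le f \<and>
                (\<forall>X. (\<forall>j\<in>{1..n}. X j \<in> Lint) \<longrightarrow> G X = f (X 1))))
       \<or> ((\<forall>y\<in>Lint. mono_le le (\<lambda>x. F x y)) \<and> (\<forall>x\<in>Lint. mono_le le (\<lambda>y. F x y)) \<and>
           (\<exists>f. (\<forall>x\<in>Lint. f x \<in> Lint) \<and> mono_le le f \<and>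
                (\<forall>X. (\<forall>j\<in>{1..n}. X j \<in> Lint) \<longrightarrow> G X = f (lmax le n X))))"
  shows "\<forall>m. iv_fuzzy_measure le n m \<longrightarrow> sugeno_FG_nondecreasing le F G n m"
proof (intro allI impI)
  fix m assume m: "iv_fuzzy_measure le n m"
  from assms(5) show "sugeno_FG_nondecreasing le F G n m"
  proof (elim disjE conjE exE)
    fix f assume "mono_le le (\<lambda>x. F x oneI)" "mono_le le f"
      "\<forall>X. (\<forall>j\<in>{1..n}. X j \<in> Lint) \<longrightarrow> G X = f (X 1)"
    from sugeno_val_mono_proj[OF assms(2,1) F_range this m]
    show ?thesis
      by (rule sugeno_FG_nondecreasingI[OF assms(2)])
  next
    fix f assume "\<forall>y\<in>Lint. mono_le le (\<lambda>x. F x y)" "\<forall>x\<in>Lint. mono_le le (\<lambda>y. F x y)"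
      "mono_le le f" "\<forall>X. (\<forall>j\<in>{1..n}. X j \<in> Lint) \<longrightarrow> G X = f (lmax le n X)"
    from sugeno_val_mono_max[OF assms(2,1) F_range this m]
    show ?thesis
      by (rule sugeno_FG_nondecreasingI[OF assms(2)])
  qed
qed

end
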